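(* Let $x\in\mathrm{Modasc}_n$. An entry $x(i)=k>1$ is the leftmost occurrence of the integer $k$ in $x$ if and only if $x(i-1)<x(i)$. In particular, $x$ is a Cayley permutation.
   Context: A Cayley permutation is a word of positive integers in which every integer from $1$ to its maximum occurs. Modified ascent sequences: $\mathrm{Modasc}_0=\{\text{empty word}\}$, $\mathrm{Modasc}_1=\{1\}$; for $n\ge2$, $x\in\mathrm{Modasc}_n$ iff there is $v\in\mathrm{Modasc}_{n-1}$ with last letter $b$ such that either $x=va$ with $1\le a\le b$, or $x=\tilde va$ with $b<a\le2+\mathrm{asc}(v)$, where $\mathrm{asc}(v)=|\{i:v(i)<v(i+1)\}|$ and $\tilde v$ is obtained from $v$ by increasing every entry $c\ge a$ by one. *)

theory Defs
  imports Main
begin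

text \<open>Words of positive integers are lists of naturals; positions are 0-based
  in Isabelle (the paper's x(i) is x ! (i-1)).\<close>

definition asc :: "nat list \<Rightarrow> nat" where
  "asc v = card {i. Suc i < length v \<and> v ! i < v ! Suc i}"

definition tilde :: "nat \<Rightarrow> nat list \<Rightarrow> nat list" where
  "tilde a v = map (\<lambda>c. if a \<le> c then c + 1 else c) v"

fun Modasc :: "nat \<Rightarrow> nat list set" where
  "Modasc 0 = {[]}"
| "Modasc (Suc 0) = {[1]}"
| "Modasc (Suc (Suc n)) =
     {v @ [a] | v a. v \<in> Modasc (Suc n) \<and> 1 \<le> a \<and> a \<le> last v}
   \<union> {tilde a v @ [a] | v a. v \<in> Modasc (Suc n) \<and> last v < a \<and> a \<le> 2 + asc v}"

definition cayley_perm :: "nat list \<Rightarrow> bool" where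
  "cayley_perm x \<longleftrightarrow> (\<exists>m. set x = {1..m})"

end

theory Submission
  imports Defs
begin

text \<open>Appending a letter \<open>a > 1\<close> to a word
  with the property preserves it exactly when \<open>a\<close> is new iff it exceeds the last letter. In the
  first rule \<open>a \<le> last v\<close> already occurs, because \<open>v\<close> is a Cayley permutation of
  \<open>{1..m}\<close>. In the second rule the shift \<open>tilde a\<close> is strictly monotone and fixes
  \<open>1\<close>, so it preserves the property, and \<open>a\<close> is new and exceeds the last letter.
  The Cayley property needs \<open>a \<le> m + 1\<close>, i.e. \<open>asc v \<le> m - 1\<close>: by the property the
  ascent tops of \<open>v\<close> are leftmost occurrences, hence pairwise distinct values in
  \<open>{2..m}\<close>.\<close>

definition leftmost_iff_ascent_at :: "nat list \<Rightarrow> nat \<Rightarrow> bool" where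
  "leftmost_iff_ascent_at x i \<longleftrightarrow>
     (1 < x ! i \<longrightarrow> ((\<forall>j < i. x ! j \<noteq> x ! i) \<longleftrightarrow> (0 < i \<and> x ! (i - 1) < x ! i)))"

definition leftmost_iff_ascent :: "nat list \<Rightarrow> bool" where
  "leftmost_iff_ascent x \<longleftrightarrow> (\<forall>i < length x. leftmost_iff_ascent_at x i)"

lemma leftmost_iff_ascent_at_append:
  "i < length w \<Longrightarrow> leftmost_iff_ascent_at (w @ u) i \<longleftrightarrow> leftmost_iff_ascent_at w i"
  by (simp add: leftmost_iff_ascent_at_def nth_append less_imp_diff_less)

lemma leftmost_iff_ascent_at_snoc:
  "leftmost_iff_ascent_at (w @ [a]) (length w) \<longleftrightarrow>
     (1 < a \<longrightarrow> (a \<notin> set w \<longleftrightarrow> w \<noteq> [] \<and> last w < a))"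
  by (cases "w = []")
     (auto simp: leftmost_iff_ascent_at_def nth_append in_set_conv_nth last_conv_nth)

lemma leftmost_iff_ascent_snoc:
  "leftmost_iff_ascent (w @ [a]) \<longleftrightarrow>
     leftmost_iff_ascent w \<and> (1 < a \<longrightarrow> (a \<notin> set w \<longleftrightarrow> w \<noteq> [] \<and> last w < a))"
  by (simp add: leftmost_iff_ascent_def All_less_Suc leftmost_iff_ascent_at_append
      leftmost_iff_ascent_at_snoc conj_commute)

lemma leftmost_iff_ascent_map:
  assumes "strict_mono f" and "\<And>p. 1 < f p \<longleftrightarrow> 1 < p"
  shows "leftmost_iff_ascent (map f x) \<longleftrightarrow> leftmost_iff_ascent x"
proof -
  have "leftmost_iff_ascent_at (map f x) i \<longleftrightarrow> leftmost_iff_ascent_at x i" if "i < length x" for i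
    using that assms
    by (simp add: leftmost_iff_ascent_at_def strict_mono_less strict_mono_eq)
  then show ?thesis
    by (simp add: leftmost_iff_ascent_def)
qed

lemma leftmost_iff_ascent_tilde:
  "2 \<le> a \<Longrightarrow> leftmost_iff_ascent (tilde a v) \<longleftrightarrow> leftmost_iff_ascent v"
  unfolding tilde_def by (rule leftmost_iff_ascent_map) (auto simp: strict_mono_def)

lemma last_tilde: "v \<noteq> [] \<Longrightarrow> last v < a \<Longrightarrow> last (tilde a v) = last v"
  by (simp add: tilde_def last_map)

lemma set_tilde_snoc:
  assumes "set v = {1..m}" and "1 \<le> a" and "a \<le> Suc m"
  shows "set (tilde a v @ [a]) = {1..Suc m}"
proof -
  define f where "f = (\<lambda>c::nat. if a \<le> c then c + 1 else c)"
  have "f ` {1..m} = {1..<a} \<union> {Suc a..Suc m}"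
  proof (intro equalityI subsetI)
    fix y assume y: "y \<in> {1..<a} \<union> {Suc a..Suc m}"
    show "y \<in> f ` {1..m}"
    proof (cases "y < a")
      case True
      then have "y = f y" "y \<in> {1..m}" using y assms(3) by (auto simp: f_def)
      then show ?thesis by blast
    next
      case False
      then have "y = f (y - 1)" "y - 1 \<in> {1..m}" using y assms(2) by (auto simp: f_def)
      then show ?thesis by blast
    qed
  qed (auto simp: f_def)
  moreover have "set (tilde a v @ [a]) = insert a (f ` {1..m})"
    using assms(1) by (simp add: tilde_def f_def)
  ultimately show ?thesis
    using assms(2,3) by auto
qed

lemma asc_le_card_set:
  assumes "leftmost_iff_ascent v" and "0 \<notin> set v"
  shows "asc v \<le> card (set v - {1})"
proof -
  let ?A = "{i. Suc i < length v \<and> v ! i < v ! Suc i}"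
  have top_gt_1: "1 < v ! Suc i" if "i \<in> ?A" for i
  proof -
    have "v ! i \<in> set v" using that by (auto intro: nth_mem)
    then have "v ! i \<noteq> 0" using assms(2) by metis
    then show ?thesis using that by simp
  qed
  have top_leftmost: "v ! j \<noteq> v ! Suc i" if "i \<in> ?A" and "j < Suc i" for i j
  proof -
    have "leftmost_iff_ascent_at v (Suc i)"
      using assms(1) that(1) by (simp add: leftmost_iff_ascent_def)
    then show ?thesis
      using that top_gt_1[OF that(1)] by (simp add: leftmost_iff_ascent_at_def)
  qed
  have "inj_on (\<lambda>i. v ! Suc i) ?A"
  proof (rule inj_onI, rule ccontr)
    fix i j assume i: "i \<in> ?A" and j: "j \<in> ?A" and eq: "v ! Suc i = v ! Suc j" and "i \<noteq> j"
    then consider "i < j" | "j < i" by linarith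
    then show False
    proof cases
      case 1
      then show False using top_leftmost[OF j, of "Suc i"] eq by simp
    next
      case 2
      then show False using top_leftmost[OF i, of "Suc j"] eq by simp
    qed
  qed
  moreover have "(\<lambda>i. v ! Suc i) ` ?A \<subseteq> set v - {1}"
  proof (rule image_subsetI)
    fix i assume i: "i \<in> ?A"
    then have "v ! Suc i \<in> set v" by simp
    with top_gt_1[OF i] show "v ! Suc i \<in> set v - {1}" by simp
  qed
  ultimately show ?thesis
    unfolding asc_def by (simp add: card_inj_on_le)
qed

lemma length_Modasc: "x \<in> Modasc n \<Longrightarrow> length x = n"
  by (induction n arbitrary: x rule: Modasc.induct) (auto simp: tilde_def)

lemma Modasc_invariant: "x \<in> Modasc n \<Longrightarrow> leftmost_iff_ascent x \<and> cayley_perm x"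
proof (induction n arbitrary: x rule: Modasc.induct)
  case 1
  then show ?case by (auto simp: leftmost_iff_ascent_def cayley_perm_def intro: exI[of _ 0])
next
  case 2
  then show ?case
    by (auto simp: leftmost_iff_ascent_def leftmost_iff_ascent_at_def cayley_perm_def)
next
  case (3 n)
  from "3.prems" obtain v a where v: "v \<in> Modasc (Suc n)" and
    x: "x = v @ [a] \<and> 1 \<le> a \<and> a \<le> last v
        \<or> x = tilde a v @ [a] \<and> last v < a \<and> a \<le> 2 + asc v"
    by auto
  from "3.IH"[OF v] obtain m where IH: "leftmost_iff_ascent v" and m: "set v = {1..m}"
    unfolding cayley_perm_def by blast
  have "v \<noteq> []" using length_Modasc[OF v] by auto
  then have last_v: "last v \<in> {1..m}" using m by (metis last_in_set)
  from x show ?case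
  proof
    assume x: "x = v @ [a] \<and> 1 \<le> a \<and> a \<le> last v"
    then have "a \<in> set v" using m last_v by auto
    then show ?thesis using x IH m by (auto simp: leftmost_iff_ascent_snoc cayley_perm_def)
  next
    assume x: "x = tilde a v @ [a] \<and> last v < a \<and> a \<le> 2 + asc v"
    have "asc v \<le> m - 1"
      using asc_le_card_set[OF IH] m by (simp add: card_Diff_singleton_if split: if_splits)
    then have "1 \<le> a" "a \<le> Suc m" using x last_v by auto
    then have "cayley_perm x"
      using x set_tilde_snoc[OF m] unfolding cayley_perm_def by blast
    have "tilde a v \<noteq> []" "last (tilde a v) < a" "a \<notin> set (tilde a v)"
      using x last_tilde \<open>v \<noteq> []\<close> by (auto simp: tilde_def)
    moreover have "2 \<le> a" using x last_v by auto
    ultimately have "leftmost_iff_ascent x"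
      using x IH by (simp add: leftmost_iff_ascent_snoc leftmost_iff_ascent_tilde)
    with \<open>cayley_perm x\<close> show ?thesis by blast
  qed
qed

theorem lemma2p1:
  fixes x :: "nat list" and n :: nat
  assumes "x \<in> Modasc n"
  shows "(\<forall>i < length x. 1 < x ! i \<longrightarrow>
            ((\<forall>j < i. x ! j \<noteq> x ! i) \<longleftrightarrow> (0 < i \<and> x ! (i - 1) < x ! i)))
         \<and> cayley_perm x"
  using Modasc_invariant[OF assms]
  unfolding leftmost_iff_ascent_def leftmost_iff_ascent_at_def .

end
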